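(* Let $1\le r\le m\le n$, $k\ge1$, and let $P$ be a prime ideal of $S$ minimal over $\mathcal I^{m,n}_{r,k}$. Then for any two index pairs $(i,j)$ and $(i',j')$ with $1\le i,i'\le m$, $1\le j,j'\le n$, we have $x^{(0)}_{i,j}\in P$ if and only if $x^{(0)}_{i',j'}\in P$.
   Context: Let $F$ be an algebraically closed field. For integers $1\le r\le m\le n$ and $k\ge 1$, let $S=F[x^{(l)}_{i,j}:1\le i\le m,\ 1\le j\le n,\ 0\le l\le k-1]$, the coordinate ring of $\mathbf A^{mnk}_F$, and let $X(t)$ be the $m\times n$ matrix over $S[t]/(t^k)$ with $(i,j)$ entry $x_{i,j}(t)=\sum_{l=0}^{k-1}x^{(l)}_{i,j}t^l$. Every element of $S[t]/(t^k)$ is uniquely $\sum_{l=0}^{k-1}c_lt^l$ with $c_l\in S$ (its coefficient of $t^l$). $\mathcal I^{m,n}_{r,k}\subseteq S$ is the ideal generated by the coefficients of $t^l$, $0\le l\le k-1$, of all $r\times r$ minors of $X(t)$, and $\mathcal Z^{m,n}_{r,k}\subseteq\mathbf A^{mnk}_F$ is its zero set. *)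

theory Defs
  imports Main "HOL-Library.Poly_Mapping" "HOL-Computational_Algebra.Polynomial"
    "HOL-Combinatorics.Permutations"
begin

text \<open>Variables x^(l)_{i,j} are indexed by triples (i,j,l) with 1<=i<=m, 1<=j<=n, 0<=l<=k-1.
  Polynomials over the field 'a in variables of type nat*nat*nat are the poly_mapping
  type below; the ring S is the subset of those using only the mnk relevant variables.\<close>

type_synonym 'a mpoly3 = "((nat \<times> nat \<times> nat) \<Rightarrow>\<^sub>0 nat) \<Rightarrow>\<^sub>0 'a"

definition alg_closed :: "'a::field itself \<Rightarrow> bool" where
  "alg_closed _ \<longleftrightarrow> (\<forall>p::'a poly. degree p > 0 \<longrightarrow> (\<exists>x. poly p x = 0))"

definition S_ring :: "nat \<Rightarrow> nat \<Rightarrow> nat \<Rightarrow> 'a::field mpoly3 set" where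
  "S_ring m n k = {p. \<forall>\<mu>. \<mu> \<in> Poly_Mapping.keys (p :: 'a mpoly3) \<longrightarrow> Poly_Mapping.keys \<mu> \<subseteq> ({1..m} \<times> {1..n} \<times> {..<k})}"

definition Xvar :: "nat \<Rightarrow> nat \<Rightarrow> nat \<Rightarrow> 'a::field mpoly3" where
  "Xvar i j l = Poly_Mapping.single (Poly_Mapping.single (i, j, l) 1) 1"

definition xt :: "nat \<Rightarrow> nat \<Rightarrow> nat \<Rightarrow> 'a::field mpoly3 poly" where
  "xt k i j = (\<Sum>l<k. monom (Xvar i j l) l)"

text \<open>The r x r minor of X(t) with rows I 0 < ... < I (r-1), columns J 0 < ... < J (r-1),
  computed in S[t]; its coefficients of t^l for l<k coincide with those in S[t]/(t^k).\<close>
definition minor :: "nat \<Rightarrow> nat \<Rightarrow> (nat \<Rightarrow> nat) \<Rightarrow> (nat \<Rightarrow> nat) \<Rightarrow> 'a::field mpoly3 poly" where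
  "minor k r I J = (\<Sum>\<sigma> | \<sigma> permutes {..<r}. of_int (sign \<sigma>) * (\<Prod>a<r. xt k (I a) (J (\<sigma> a))))"

definition minor_coeffs :: "nat \<Rightarrow> nat \<Rightarrow> nat \<Rightarrow> nat \<Rightarrow> 'a::field mpoly3 set" where
  "minor_coeffs m n r k = {coeff (minor k r I J) l | I J l.
      l < k \<and> strict_mono_on {..<r} I \<and> strict_mono_on {..<r} J \<and>
      I ` {..<r} \<subseteq> {1..m} \<and> J ` {..<r} \<subseteq> {1..n}}"

definition ideal_in :: "'b::comm_ring_1 set \<Rightarrow> 'b set \<Rightarrow> bool" where
  "ideal_in R I \<longleftrightarrow> I \<subseteq> R \<and> 0 \<in> I \<and> (\<forall>a\<in>I. \<forall>b\<in>I. a + b \<in> I) \<and> (\<forall>a\<in>R. \<forall>b\<in>I. a * b \<in> I)"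

definition ideal_gen_in :: "'b::comm_ring_1 set \<Rightarrow> 'b set \<Rightarrow> 'b set" where
  "ideal_gen_in R G = \<Inter>{I. ideal_in R I \<and> G \<subseteq> I}"

definition prime_ideal_in :: "'b::comm_ring_1 set \<Rightarrow> 'b set \<Rightarrow> bool" where
  "prime_ideal_in R P \<longleftrightarrow> ideal_in R P \<and> P \<noteq> R \<and>
     (\<forall>a\<in>R. \<forall>b\<in>R. a * b \<in> P \<longrightarrow> a \<in> P \<or> b \<in> P)"

definition minimal_prime_over :: "'b::comm_ring_1 set \<Rightarrow> 'b set \<Rightarrow> 'b set \<Rightarrow> bool" where
  "minimal_prime_over R I P \<longleftrightarrow> prime_ideal_in R P \<and> I \<subseteq> P \<and>
     (\<forall>Q. prime_ideal_in R Q \<and> I \<subseteq> Q \<and> Q \<subseteq> P \<longrightarrow> Q = P)"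

definition Iideal :: "nat \<Rightarrow> nat \<Rightarrow> nat \<Rightarrow> nat \<Rightarrow> 'a::field mpoly3 set" where
  "Iideal m n r k = ideal_gen_in (S_ring m n k) (minor_coeffs m n r k)"

end

theory Submission
  imports Defs "Jordan_Normal_Form.Char_Poly"
begin

text \<open>Adding c times row i' of X(t) to row i, with c a new indeterminate, is the substitution
  x^(l)_{i,b} \<mapsto> x^(l)_{i,b} + c x^(l)_{i',b}. It sends every r x r minor to itself plus c times
  another minor (or zero) when i' = i +- 1, so every coefficient in c of the image of an element of
  I lies in I. If x = x^(0)_{i,j} lies in the minimal prime P over I, then y x^N \<in> I for some
  y \<notin> P. The coefficient of c^N in the image of y x^N is y (x^(0)_{i',j})^N modulo x, so it
  forces x^(0)_{i',j} \<in> P. Columns are treated in the same way, and stepping through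
  neighbouring rows and columns connects any two positions.\<close>

section \<open>Ideals and minimal primes in a subring\<close>

locale subring_set =
  fixes R :: "'b::comm_ring_1 set"
  assumes zero_mem [simp]: "0 \<in> R" and one_mem [simp]: "1 \<in> R"
    and add_mem: "a \<in> R \<Longrightarrow> b \<in> R \<Longrightarrow> a + b \<in> R"
    and mult_mem: "a \<in> R \<Longrightarrow> b \<in> R \<Longrightarrow> a * b \<in> R"
    and uminus_mem: "a \<in> R \<Longrightarrow> - a \<in> R"
begin

lemma sum_mem: "(\<And>x. x \<in> A \<Longrightarrow> f x \<in> R) \<Longrightarrow> sum f A \<in> R"
  by (induction A rule: infinite_finite_induct) (auto intro: add_mem)

lemma prod_mem: "(\<And>x. x \<in> A \<Longrightarrow> f x \<in> R) \<Longrightarrow> prod f A \<in> R"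
  by (induction A rule: infinite_finite_induct) (auto intro: mult_mem)

lemma power_mem: "a \<in> R \<Longrightarrow> a ^ N \<in> R"
  by (induction N) (auto intro: mult_mem)

lemma of_int_mem: "of_int z \<in> R"
proof -
  have of_nat_mem: "of_nat N \<in> R" for N
    by (induction N) (auto intro: add_mem)
  show ?thesis
    by (cases z rule: int_cases) (auto intro: uminus_mem of_nat_mem simp del: of_nat_Suc)
qed

lemma binomial_power_split:
  assumes "a \<in> R" "b \<in> R"
  obtains d where "d \<in> R" "(a + b) ^ N = b ^ N + a * d"
proof -
  have "\<exists>d\<in>R. (a + b) ^ N = b ^ N + a * d"
  proof (induction N)
    case 0
    show ?case by (intro bexI[of _ 0]) auto
  next
    case (Suc N)
    then obtain d where d: "d \<in> R" "(a + b) ^ N = b ^ N + a * d" by blast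
    then have "(a + b) ^ Suc N = b ^ Suc N + a * (b ^ N + d * (a + b))"
      by (simp add: algebra_simps)
    moreover have "b ^ N + d * (a + b) \<in> R"
      using assms d(1) by (intro add_mem mult_mem power_mem)
    ultimately show ?case by blast
  qed
  then show ?thesis using that by blast
qed

lemma ideal_in_carrier: "ideal_in R R"
  unfolding ideal_in_def by (auto intro: add_mem mult_mem)

lemma ideal_in_uminus: "ideal_in R Q \<Longrightarrow> a \<in> Q \<Longrightarrow> - a \<in> Q"
  unfolding ideal_in_def using uminus_mem[OF one_mem] by (metis mult_minus1)

lemma ideal_in_diff: "ideal_in R Q \<Longrightarrow> a \<in> Q \<Longrightarrow> b \<in> Q \<Longrightarrow> a - b \<in> Q"
  using ideal_in_uminus[of Q b] unfolding ideal_in_def by (metis diff_conv_add_uminus)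

lemma ideal_in_sum: "ideal_in R Q \<Longrightarrow> (\<And>x. x \<in> A \<Longrightarrow> f x \<in> Q) \<Longrightarrow> sum f A \<in> Q"
  by (induction A rule: infinite_finite_induct) (auto simp: ideal_in_def)

lemma ideal_in_mult_right: "ideal_in R Q \<Longrightarrow> a \<in> Q \<Longrightarrow> b \<in> R \<Longrightarrow> a * b \<in> Q"
  unfolding ideal_in_def by (metis mult.commute)

lemma ideal_in_Inter: "F \<noteq> {} \<Longrightarrow> (\<And>Q. Q \<in> F \<Longrightarrow> ideal_in R Q) \<Longrightarrow> ideal_in R (\<Inter>F)"
  unfolding ideal_in_def by blast

lemma ideal_in_ideal_gen_in: "G \<subseteq> R \<Longrightarrow> ideal_in R (ideal_gen_in R G)"
  unfolding ideal_gen_in_def by (rule ideal_in_Inter) (use ideal_in_carrier in auto)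

lemma ideal_in_Union_chain:
  assumes "C \<noteq> {}" "chain\<^sub>\<subseteq> C" "\<And>Q. Q \<in> C \<Longrightarrow> ideal_in R Q"
  shows "ideal_in R (\<Union>C)"
  unfolding ideal_in_def
proof (intro conjI ballI)
  show "\<Union>C \<subseteq> R" "0 \<in> \<Union>C" using assms(1,3) unfolding ideal_in_def by blast+
next
  fix a b assume "a \<in> \<Union>C" "b \<in> \<Union>C"
  then obtain A B where AB: "A \<in> C" "B \<in> C" "a \<in> A" "b \<in> B" by blast
  with assms(2) have "A \<subseteq> B \<or> B \<subseteq> A" unfolding chain_subset_def by blast
  then obtain D where "D \<in> C" "a \<in> D" "b \<in> D" using AB by blast
  then show "a + b \<in> \<Union>C" using assms(3) unfolding ideal_in_def by blast
next
  fix a b assume "a \<in> R" "b \<in> \<Union>C"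
  then show "a * b \<in> \<Union>C" using assms(3) unfolding ideal_in_def by blast
qed

lemma ideal_in_add_principal:
  assumes Q: "ideal_in R Q" and a: "a \<in> R"
  shows "ideal_in R {q + s * a | q s. q \<in> Q \<and> s \<in> R}" (is "ideal_in R ?Qa")
  unfolding ideal_in_def
proof (intro conjI ballI)
  show "?Qa \<subseteq> R"
    using Q a unfolding ideal_in_def by (auto intro: add_mem mult_mem)
  show "0 \<in> ?Qa"
    using Q unfolding ideal_in_def by force
next
  fix u v assume "u \<in> ?Qa" "v \<in> ?Qa"
  then obtain q1 s1 q2 s2 where "u = q1 + s1 * a" "v = q2 + s2 * a" "q1 \<in> Q" "q2 \<in> Q" "s1 \<in> R" "s2 \<in> R"
    by blast
  moreover have "u + v = (q1 + q2) + (s1 + s2) * a" if "u = q1 + s1 * a" "v = q2 + s2 * a"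
    using that by (simp add: algebra_simps)
  ultimately show "u + v \<in> ?Qa"
    using Q unfolding ideal_in_def by (blast intro: add_mem)
next
  fix u v assume "u \<in> R" "v \<in> ?Qa"
  then obtain q s where "v = q + s * a" "q \<in> Q" "s \<in> R" by blast
  moreover have "u * v = u * q + (u * s) * a" if "v = q + s * a"
    using that by (simp add: algebra_simps)
  ultimately show "u * v \<in> ?Qa"
    using Q \<open>u \<in> R\<close> unfolding ideal_in_def by (blast intro: mult_mem)
qed

lemma prime_ideal_in_one_notin:
  assumes P: "prime_ideal_in R P" shows "1 \<notin> P"
proof
  assume "1 \<in> P"
  then have "a * 1 \<in> P" if "a \<in> R" for a
    using P that unfolding prime_ideal_in_def ideal_in_def by blast
  then have "R \<subseteq> P" by auto
  with P show False unfolding prime_ideal_in_def ideal_in_def by blast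
qed

lemma prime_ideal_in_power_mem:
  assumes P: "prime_ideal_in R P" and a: "a \<in> R" shows "a ^ N \<in> P \<Longrightarrow> a \<in> P"
proof (induction N)
  case 0
  then show ?case using prime_ideal_in_one_notin[OF P] by simp
next
  case (Suc N)
  have "a * a ^ N \<in> P" using Suc.prems by simp
  then have "a \<in> P \<or> a ^ N \<in> P"
    using P a power_mem[OF a] unfolding prime_ideal_in_def by blast
  with Suc.IH show ?case by blast
qed

lemma prime_ideal_in_if_maximal_disjoint:
  assumes T: "1 \<in> T" "\<And>s t. s \<in> T \<Longrightarrow> t \<in> T \<Longrightarrow> s * t \<in> T"
    and Q: "ideal_in R Q" "Q \<inter> T = {}"
    and maximal: "\<And>Q'. ideal_in R Q' \<Longrightarrow> Q \<subseteq> Q' \<Longrightarrow> Q' \<inter> T = {} \<Longrightarrow> Q' = Q"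
  shows "prime_ideal_in R Q"
  unfolding prime_ideal_in_def
proof (intro conjI ballI impI)
  show "Q \<noteq> R" using T(1) Q(2) one_mem by blast
next
  have Q_add: "u + v \<in> Q" if "u \<in> Q" "v \<in> Q" for u v
    using Q(1) that unfolding ideal_in_def by blast
  have Q_mult: "u * v \<in> Q" if "u \<in> R" "v \<in> Q" for u v
    using Q(1) that unfolding ideal_in_def by blast
  have meets_T: "\<exists>q s. q \<in> Q \<and> s \<in> R \<and> q + s * a \<in> T" if a: "a \<in> R" "a \<notin> Q" for a
  proof (rule ccontr)
    let ?Qa = "{q + s * a | q s. q \<in> Q \<and> s \<in> R}"
    assume "\<not> ?thesis"
    then have "?Qa \<inter> T = {}" by blast
    moreover have "Q \<subseteq> ?Qa"
    proof
      fix q assume "q \<in> Q"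
      then show "q \<in> ?Qa" by (intro CollectI exI[of _ q] exI[of _ 0]) simp
    qed
    ultimately have "?Qa = Q" by (rule maximal[OF ideal_in_add_principal[OF Q(1) a(1)], rotated])
    moreover have "a \<in> ?Qa"
      using Q(1) unfolding ideal_in_def by (intro CollectI exI[of _ 0] exI[of _ 1]) simp
    ultimately show False using a(2) by blast
  qed
  fix a b assume a: "a \<in> R" and b: "b \<in> R" and ab: "a * b \<in> Q"
  show "a \<in> Q \<or> b \<in> Q"
  proof (rule ccontr)
    assume "\<not> (a \<in> Q \<or> b \<in> Q)"
    then obtain q1 s1 q2 s2 where q: "q1 \<in> Q" "q2 \<in> Q" and s: "s1 \<in> R" "s2 \<in> R"
      and t: "q1 + s1 * a \<in> T" "q2 + s2 * b \<in> T"
      using meets_T[OF a] meets_T[OF b] by blast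
    have "q2 + s2 * b \<in> R" using Q(1) q(2) s(2) b unfolding ideal_in_def by (blast intro: add_mem mult_mem)
    have "(q1 + s1 * a) * (q2 + s2 * b) = q1 * (q2 + s2 * b) + ((s1 * a) * q2 + (s1 * s2) * (a * b))"
      by (simp add: algebra_simps)
    also have "\<dots> \<in> Q"
      using ideal_in_mult_right[OF Q(1) q(1) \<open>q2 + s2 * b \<in> R\<close>]
        Q_mult[OF mult_mem[OF s(1) a] q(2)] Q_mult[OF mult_mem[OF s] ab]
      by (intro Q_add)
    finally show False using Q(2) T(2)[OF t] by blast
  qed
qed (fact Q(1))

lemma maximal_disjoint_ideal_exists:
  assumes I: "ideal_in R I" "I \<inter> T = {}"
  obtains Q where "ideal_in R Q" "I \<subseteq> Q" "Q \<inter> T = {}"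
    "\<And>Q'. ideal_in R Q' \<Longrightarrow> Q \<subseteq> Q' \<Longrightarrow> Q' \<inter> T = {} \<Longrightarrow> Q' = Q"
proof -
  define F where "F = {Q. ideal_in R Q \<and> I \<subseteq> Q \<and> Q \<inter> T = {}}"
  have "\<exists>Q\<in>F. \<forall>Q'\<in>F. Q \<subseteq> Q' \<longrightarrow> Q' = Q"
  proof (rule Zorn_Lemma2, intro ballI)
    fix C assume "C \<in> chains F"
    then have CF: "C \<subseteq> F" and chain: "chain\<^sub>\<subseteq> C" unfolding chains_def by auto
    show "\<exists>U\<in>F. \<forall>Q\<in>C. Q \<subseteq> U"
    proof (cases "C = {}")
      case True
      have "I \<in> F" using I unfolding F_def by blast
      with True show ?thesis by blast
    next
      case False
      have "ideal_in R (\<Union>C)"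
        by (rule ideal_in_Union_chain[OF False chain]) (use CF in \<open>auto simp: F_def\<close>)
      moreover have "I \<subseteq> \<Union>C" "\<Union>C \<inter> T = {}" using CF False unfolding F_def by blast+
      ultimately have "\<Union>C \<in> F" unfolding F_def by blast
      then show ?thesis by blast
    qed
  qed
  then obtain Q where "Q \<in> F" and Q_maximal: "\<And>Q'. Q' \<in> F \<Longrightarrow> Q \<subseteq> Q' \<Longrightarrow> Q' = Q"
    by blast
  then have Q: "ideal_in R Q" "I \<subseteq> Q" "Q \<inter> T = {}" unfolding F_def by auto
  show thesis
  proof (rule that[OF Q])
    fix Q' assume "ideal_in R Q'" "Q \<subseteq> Q'" "Q' \<inter> T = {}"
    with Q(2) show "Q' = Q" by (intro Q_maximal) (auto simp: F_def)
  qed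
qed

text \<open>Were no \<open>y x\<^sup>N\<close> with \<open>y \<notin> P\<close> in \<open>I\<close>, an ideal containing \<open>I\<close> and maximal among those
  missing the multiplicative set \<open>T = (R - P) x\<^sup>\<nat>\<close> would be a prime between \<open>I\<close> and \<open>P\<close>,
  hence \<open>P\<close> by minimality; but \<open>x \<in> T\<close>.\<close>

lemma minimal_prime_over_witness:
  assumes I: "ideal_in R I" and P: "minimal_prime_over R I P" and x: "x \<in> P"
  obtains y N where "y \<in> R" "y \<notin> P" "y * x ^ N \<in> I"
proof -
  have P_prime: "prime_ideal_in R P" and P_minimal: "\<And>Q. prime_ideal_in R Q \<Longrightarrow> I \<subseteq> Q \<Longrightarrow> Q \<subseteq> P \<Longrightarrow> Q = P"
    using P unfolding minimal_prime_over_def by auto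
  define T where "T = {y * x ^ N | y N. y \<in> R \<and> y \<notin> P}"
  have one_T: "1 \<in> T" and x_T: "x \<in> T"
    unfolding T_def using prime_ideal_in_one_notin[OF P_prime]
    by (intro CollectI exI[of _ 1] exI[of _ 0] exI[of _ "Suc 0"]; simp)+
  have RP_T: "y \<in> T" if "y \<in> R" "y \<notin> P" for y
    unfolding T_def using that by (intro CollectI exI[of _ y] exI[of _ 0]) simp
  have mult_T: "s * t \<in> T" if st: "s \<in> T" "t \<in> T" for s t
  proof -
    obtain y1 N1 y2 N2 where st_eq: "s = y1 * x ^ N1" "t = y2 * x ^ N2"
      and y: "y1 \<in> R" "y1 \<notin> P" "y2 \<in> R" "y2 \<notin> P"
      using st unfolding T_def by blast
    have "y1 * y2 \<in> R" using mult_mem y(1,3) .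
    moreover have "y1 * y2 \<notin> P" using P_prime y unfolding prime_ideal_in_def by blast
    moreover have "s * t = (y1 * y2) * x ^ (N1 + N2)"
      unfolding st_eq by (simp add: power_add mult_ac)
    ultimately show ?thesis unfolding T_def by blast
  qed
  show thesis
  proof (rule ccontr)
    assume no_witness: "\<not> thesis"
    have "I \<inter> T = {}"
    proof (rule ccontr)
      assume "I \<inter> T \<noteq> {}"
      then obtain y N where "y \<in> R" "y \<notin> P" "y * x ^ N \<in> I" unfolding T_def by blast
      then show False using that no_witness by blast
    qed
    then obtain Q where Q: "ideal_in R Q" "I \<subseteq> Q" "Q \<inter> T = {}"
      and Q_maximal: "\<And>Q'. ideal_in R Q' \<Longrightarrow> Q \<subseteq> Q' \<Longrightarrow> Q' \<inter> T = {} \<Longrightarrow> Q' = Q"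
      using maximal_disjoint_ideal_exists[OF I] by blast
    have "prime_ideal_in R Q"
      by (rule prime_ideal_in_if_maximal_disjoint[OF one_T mult_T Q(1,3) Q_maximal])
    moreover have "Q \<subseteq> P"
    proof
      fix q assume "q \<in> Q"
      moreover have "Q \<subseteq> R" using Q(1) unfolding ideal_in_def by blast
      ultimately show "q \<in> P" using RP_T Q(3) by blast
    qed
    ultimately have "Q = P" using P_minimal Q(2) by blast
    then show False using x x_T Q(3) by blast
  qed
qed

end

lemma ideal_gen_in_subset: "ideal_in R Q \<Longrightarrow> G \<subseteq> Q \<Longrightarrow> ideal_gen_in R G \<subseteq> Q"
  unfolding ideal_gen_in_def by blast

definition poly_over :: "'b::zero set \<Rightarrow> 'b poly set" where
  "poly_over R = {p. \<forall>e. coeff p e \<in> R}"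

context subring_set
begin

lemma subring_set_poly_over: "subring_set (poly_over R)"
  by unfold_locales
    (auto simp: poly_over_def coeff_1 coeff_mult intro!: add_mem mult_mem uminus_mem sum_mem)

lemma pCons_mem_poly_over: "a \<in> R \<Longrightarrow> p \<in> poly_over R \<Longrightarrow> pCons a p \<in> poly_over R"
  by (auto simp: poly_over_def coeff_pCons split: nat.split)

lemma const_mem_poly_over: "a \<in> R \<Longrightarrow> [:a:] \<in> poly_over R"
  by (auto simp: poly_over_def coeff_pCons split: nat.split)

lemma ideal_in_coeffs_preimage:
  assumes \<Phi>: "comm_ring_hom \<Phi>" "\<And>g. g \<in> R \<Longrightarrow> \<Phi> g \<in> poly_over R" and P: "ideal_in R P"
  shows "ideal_in R {g \<in> R. \<forall>e. coeff (\<Phi> g) e \<in> P}"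
proof -
  interpret \<Phi>: comm_ring_hom \<Phi> by (fact \<Phi>(1))
  have P_add: "a + b \<in> P" if "a \<in> P" "b \<in> P" for a b
    using P that unfolding ideal_in_def by blast
  have P_mult: "a * b \<in> P" if "a \<in> R" "b \<in> P" for a b
    using P that unfolding ideal_in_def by blast
  show ?thesis
    unfolding ideal_in_def[of R "{g \<in> R. \<forall>e. coeff (\<Phi> g) e \<in> P}"]
  proof (intro conjI ballI)
    show "0 \<in> {g \<in> R. \<forall>e. coeff (\<Phi> g) e \<in> P}"
      using P unfolding ideal_in_def by simp
  next
    fix u v assume "u \<in> {g \<in> R. \<forall>e. coeff (\<Phi> g) e \<in> P}" "v \<in> {g \<in> R. \<forall>e. coeff (\<Phi> g) e \<in> P}"
    then show "u + v \<in> {g \<in> R. \<forall>e. coeff (\<Phi> g) e \<in> P}"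
      by (simp add: \<Phi>.hom_add add_mem P_add)
  next
    fix u v assume u: "u \<in> R" and v: "v \<in> {g \<in> R. \<forall>e. coeff (\<Phi> g) e \<in> P}"
    have "coeff (\<Phi> (u * v)) e \<in> P" for e
      unfolding \<Phi>.hom_mult coeff_mult
    proof (rule ideal_in_sum[OF P])
      fix i
      have "coeff (\<Phi> u) i \<in> R" using \<Phi>(2)[OF u] unfolding poly_over_def by blast
      then show "coeff (\<Phi> u) i * coeff (\<Phi> v) (e - i) \<in> P" using v by (simp add: P_mult)
    qed
    with u v show "u * v \<in> {g \<in> R. \<forall>e. coeff (\<Phi> g) e \<in> P}" by (simp add: mult_mem)
  qed auto
qed

lemma minimal_prime_over_deformation:
  assumes I: "ideal_in R I" and P: "minimal_prime_over R I P"
    and \<Phi>: "comm_ring_hom \<Phi>" "\<And>g. g \<in> R \<Longrightarrow> \<Phi> g \<in> poly_over R" "\<And>g. g \<in> R \<Longrightarrow> coeff (\<Phi> g) 0 = g"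
    and \<Phi>_I: "\<And>g e. g \<in> I \<Longrightarrow> coeff (\<Phi> g) e \<in> P"
    and x: "x \<in> P" "\<Phi> x = [:x, u:]" and u: "u \<in> R"
  shows "u \<in> P"
proof -
  interpret \<Phi>: comm_ring_hom \<Phi> by (fact \<Phi>(1))
  interpret poly: subring_set "poly_over R" by (rule subring_set_poly_over)
  have P_prime: "prime_ideal_in R P" using P unfolding minimal_prime_over_def by blast
  then have P_ideal: "ideal_in R P" and "x \<in> R" using x(1) unfolding prime_ideal_in_def ideal_in_def by auto
  obtain y N where y: "y \<in> R" "y \<notin> P" and yx: "y * x ^ N \<in> I"
    using minimal_prime_over_witness[OF I P x(1)] .
  have "monom u 1 \<in> poly_over R" using u by (auto simp: poly_over_def coeff_monom)
  then obtain D where D: "D \<in> poly_over R" "([:x:] + monom u 1) ^ N = monom u 1 ^ N + [:x:] * D"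
    using poly.binomial_power_split[OF const_mem_poly_over[OF \<open>x \<in> R\<close>]] by blast
  let ?Y = "\<Phi> y"
  have "\<Phi> (y * x ^ N) = ?Y * ([:x:] + monom u 1) ^ N"
    by (simp add: \<Phi>.hom_mult \<Phi>.hom_power x(2) monom_Suc monom_0)
  also have "\<dots> = monom (u ^ N) N * ?Y + Polynomial.smult x (?Y * D)"
    unfolding D(2) by (simp add: monom_power algebra_simps)
  finally have "coeff (\<Phi> (y * x ^ N)) N = u ^ N * y + x * coeff (?Y * D) N"
    by (simp add: coeff_monom_mult \<Phi>(3)[OF y(1)])
  moreover have "coeff (?Y * D) N \<in> R"
    using poly.mult_mem[OF \<Phi>(2)[OF y(1)] D(1)] unfolding poly_over_def by blast
  then have "x * coeff (?Y * D) N \<in> P" by (rule ideal_in_mult_right[OF P_ideal x(1)])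
  ultimately have "u ^ N * y \<in> P"
    using ideal_in_diff[OF P_ideal \<Phi>_I[OF yx]] by (metis add_diff_cancel_right')
  then have "u ^ N \<in> P"
    using P_prime y power_mem[OF u] unfolding prime_ideal_in_def by blast
  then show ?thesis by (rule prime_ideal_in_power_mem[OF P_prime u])
qed

end

section \<open>Substituting into multivariate polynomials\<close>

definition eval_monomial :: "('v \<Rightarrow> 'b::comm_monoid_mult) \<Rightarrow> ('v \<Rightarrow>\<^sub>0 nat) \<Rightarrow> 'b" where
  "eval_monomial v \<mu> = (\<Prod>x\<in>Poly_Mapping.keys \<mu>. v x ^ Poly_Mapping.lookup \<mu> x)"

definition eval_pm :: "('a::zero \<Rightarrow> 'b) \<Rightarrow> ('v \<Rightarrow> 'b) \<Rightarrow> (('v \<Rightarrow>\<^sub>0 nat) \<Rightarrow>\<^sub>0 'a) \<Rightarrow> 'b::comm_semiring_1" where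
  "eval_pm c v p = (\<Sum>\<mu>\<in>Poly_Mapping.keys p. c (Poly_Mapping.lookup p \<mu>) * eval_monomial v \<mu>)"

lemma eval_monomial_superset:
  "finite A \<Longrightarrow> Poly_Mapping.keys \<mu> \<subseteq> A \<Longrightarrow> eval_monomial v \<mu> = (\<Prod>x\<in>A. v x ^ Poly_Mapping.lookup \<mu> x)"
  unfolding eval_monomial_def by (rule prod.mono_neutral_left) (auto simp: in_keys_iff)

lemma eval_monomial_add: "eval_monomial v (\<mu> + \<nu>) = eval_monomial v \<mu> * eval_monomial v \<nu>"
proof -
  let ?A = "Poly_Mapping.keys \<mu> \<union> Poly_Mapping.keys \<nu>"
  have "eval_monomial v (\<mu> + \<nu>) = (\<Prod>x\<in>?A. v x ^ Poly_Mapping.lookup \<mu> x * v x ^ Poly_Mapping.lookup \<nu> x)"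
    using Poly_Mapping.keys_add[of \<mu> \<nu>]
    by (subst eval_monomial_superset[of ?A]) (auto simp: lookup_add power_add)
  also have "\<dots> = eval_monomial v \<mu> * eval_monomial v \<nu>"
    by (subst (1 2) eval_monomial_superset[of ?A]) (auto simp: prod.distrib)
  finally show ?thesis .
qed

lemma eval_monomial_0 [simp]: "eval_monomial v 0 = 1"
  by (simp add: eval_monomial_def)

lemma eval_monomial_single [simp]: "eval_monomial v (Poly_Mapping.single x e) = v x ^ e"
  by (cases "e = 0") (simp_all add: eval_monomial_def)

lemma eval_pm_0 [simp]: "eval_pm c v 0 = 0"
  by (simp add: eval_pm_def)

lemma eval_pm_superset:
  "c 0 = 0 \<Longrightarrow> finite A \<Longrightarrow> Poly_Mapping.keys p \<subseteq> A \<Longrightarrow>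
    eval_pm c v p = (\<Sum>\<mu>\<in>A. c (Poly_Mapping.lookup p \<mu>) * eval_monomial v \<mu>)"
  unfolding eval_pm_def by (intro sum.mono_neutral_left) (auto simp: in_keys_iff)

lemma poly_mapping_sum_single:
  "(\<Sum>\<mu>\<in>Poly_Mapping.keys p. Poly_Mapping.single \<mu> (Poly_Mapping.lookup p \<mu>)) = p"
  by (rule poly_mapping_eqI) (auto simp: lookup_sum lookup_single when_def in_keys_iff)

context comm_ring_hom
begin

lemma eval_pm_add: "eval_pm hom v (p + q) = eval_pm hom v p + eval_pm hom v q"
proof -
  let ?A = "Poly_Mapping.keys p \<union> Poly_Mapping.keys q"
  have "eval_pm hom v (p + q) =
      (\<Sum>\<mu>\<in>?A. hom (Poly_Mapping.lookup p \<mu>) * eval_monomial v \<mu> + hom (Poly_Mapping.lookup q \<mu>) * eval_monomial v \<mu>)"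
    using Poly_Mapping.keys_add[of p q]
    by (subst eval_pm_superset[where A = ?A]) (auto simp: lookup_add hom_add distrib_right)
  also have "\<dots> = eval_pm hom v p + eval_pm hom v q"
    by (subst (1 2) eval_pm_superset[where A = ?A]) (auto simp: sum.distrib)
  finally show ?thesis .
qed

lemma eval_pm_single: "eval_pm hom v (Poly_Mapping.single \<mu> a) = hom a * eval_monomial v \<mu>"
  by (cases "a = 0") (auto simp: eval_pm_def)

lemma eval_pm_sum: "eval_pm hom v (sum f A) = (\<Sum>x\<in>A. eval_pm hom v (f x))"
  by (induction A rule: infinite_finite_induct) (simp_all add: eval_pm_add)

lemma eval_pm_mult: "eval_pm hom v (p * q) = eval_pm hom v p * eval_pm hom v q"
proof -
  let ?p = "Poly_Mapping.lookup p" and ?q = "Poly_Mapping.lookup q"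
  have "p * q = (\<Sum>\<mu>\<in>Poly_Mapping.keys p. \<Sum>\<nu>\<in>Poly_Mapping.keys q. Poly_Mapping.single (\<mu> + \<nu>) (?p \<mu> * ?q \<nu>))"
    by (subst (1) poly_mapping_sum_single[of p, symmetric], subst (1) poly_mapping_sum_single[of q, symmetric])
      (simp add: sum_product mult_single)
  then have "eval_pm hom v (p * q) =
      (\<Sum>\<mu>\<in>Poly_Mapping.keys p. \<Sum>\<nu>\<in>Poly_Mapping.keys q. (hom (?p \<mu>) * eval_monomial v \<mu>) * (hom (?q \<nu>) * eval_monomial v \<nu>))"
    by (simp add: eval_pm_sum eval_pm_single hom_mult eval_monomial_add mult_ac)
  also have "\<dots> = eval_pm hom v p * eval_pm hom v q"
    by (simp add: eval_pm_def sum_product)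
  finally show ?thesis .
qed

lemma comm_ring_hom_eval_pm: "comm_ring_hom (eval_pm hom v)"
  by unfold_locales
    (simp_all add: eval_pm_add eval_pm_mult eval_pm_single flip: Poly_Mapping.single_one)

lemma hom_eval_pm:
  "\<phi> (eval_pm hom v p) = eval_pm (\<phi> \<circ> hom) (\<phi> \<circ> v) p" if "comm_ring_hom \<phi>"
proof -
  interpret \<phi>: comm_ring_hom \<phi> by (fact that)
  show ?thesis by (simp add: eval_pm_def eval_monomial_def \<phi>.hom_sum \<phi>.hom_mult \<phi>.hom_prod \<phi>.hom_power)
qed

end

definition pm_var :: "'v \<Rightarrow> ('v \<Rightarrow>\<^sub>0 nat) \<Rightarrow>\<^sub>0 'a::comm_ring_1" where
  "pm_var x = Poly_Mapping.single (Poly_Mapping.single x 1) 1"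

lemma pm_var_power: "pm_var x ^ e = Poly_Mapping.single (Poly_Mapping.single x e) 1"
  by (induction e) (simp_all add: pm_var_def mult_single single_add[symmetric] mult.commute)

lemma prod_single_one:
  "(\<Prod>x\<in>A. Poly_Mapping.single (f x) (1::'a::comm_semiring_1)) = Poly_Mapping.single (\<Sum>x\<in>A. f x) 1"
  by (induction A rule: infinite_finite_induct) (simp_all add: mult_single)

lemma eval_monomial_pm_var: "eval_monomial pm_var \<mu> = Poly_Mapping.single \<mu> 1"
proof -
  have "eval_monomial pm_var \<mu> =
      (\<Prod>x\<in>Poly_Mapping.keys \<mu>. Poly_Mapping.single (Poly_Mapping.single x (Poly_Mapping.lookup \<mu> x)) 1)"
    by (simp add: eval_monomial_def pm_var_power)
  also have "\<dots> = Poly_Mapping.single (\<Sum>x\<in>Poly_Mapping.keys \<mu>. Poly_Mapping.single x (Poly_Mapping.lookup \<mu> x)) 1"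
    by (rule prod_single_one)
  finally show ?thesis by (simp add: poly_mapping_sum_single)
qed

lemma eval_pm_pm_var: "eval_pm (Poly_Mapping.single 0) pm_var p = p"
  by (simp add: eval_pm_def eval_monomial_pm_var mult_single poly_mapping_sum_single)

text \<open>\<open>deform w p\<close> is p with every variable x replaced by x + c w(x), where c is the variable
  of the polynomial ring.\<close>

definition deform :: "('v \<Rightarrow> ('v \<Rightarrow>\<^sub>0 nat) \<Rightarrow>\<^sub>0 'a) \<Rightarrow> (('v \<Rightarrow>\<^sub>0 nat) \<Rightarrow>\<^sub>0 'a::comm_ring_1) \<Rightarrow> (('v \<Rightarrow>\<^sub>0 nat) \<Rightarrow>\<^sub>0 'a) poly" where
  "deform w = eval_pm (\<lambda>a. [:Poly_Mapping.single 0 a:]) (\<lambda>x. [:pm_var x, w x:])"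

lemma comm_ring_hom_const_single: "comm_ring_hom (\<lambda>a::'a::comm_ring_1. [:Poly_Mapping.single (0::'v \<Rightarrow>\<^sub>0 nat) a:])"
  by unfold_locales (simp_all add: single_add mult_single one_pCons mult.commute)

lemma comm_ring_hom_deform: "comm_ring_hom (deform w)"
  unfolding deform_def by (rule comm_ring_hom.comm_ring_hom_eval_pm[OF comm_ring_hom_const_single])

lemma comm_ring_hom_coeff_0: "comm_ring_hom (\<lambda>p. coeff p 0)"
  by unfold_locales (simp_all add: coeff_mult_0)

lemma deform_0 [simp]: "deform w 0 = 0"
  by (simp add: deform_def)

lemma coeff_deform_0: "coeff (deform w p) 0 = p"
  unfolding deform_def comm_ring_hom.hom_eval_pm[OF comm_ring_hom_const_single comm_ring_hom_coeff_0]
  by (simp add: comp_def eval_pm_pm_var)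

lemma deform_pm_var: "deform w (pm_var x) = [:pm_var x, w x:]"
proof -
  have "deform w (Poly_Mapping.single (Poly_Mapping.single x 1) 1) = [:Poly_Mapping.single 0 1:] * [:pm_var x, w x:]"
    unfolding deform_def comm_ring_hom.eval_pm_single[OF comm_ring_hom_const_single] by simp
  then show ?thesis by (simp add: pm_var_def one_pCons)
qed

section \<open>Row operations on minors\<close>

definition det_rows :: "nat \<Rightarrow> (nat \<Rightarrow> nat \<Rightarrow> 'b::comm_ring_1) \<Rightarrow> (nat \<Rightarrow> nat) \<Rightarrow> 'b" where
  "det_rows r F R = det (mat r r (\<lambda>(a, b). F (R a) b))"

lemma map_mat_mat: "map_mat f (mat r c g) = mat r c (\<lambda>ij. f (g ij))"
  by (rule eq_matI) auto

lemma det_row_linear: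
  fixes f g :: "nat \<Rightarrow> 'b::comm_ring_1"
  assumes p: "p < r"
  shows "det (mat r r (\<lambda>(a, b). if a = p then f b + c * g b else E a b)) =
    det (mat r r (\<lambda>(a, b). if a = p then f b else E a b)) + c * det (mat r r (\<lambda>(a, b). if a = p then g b else E a b))"
proof -
  let ?A = "\<lambda>h. mat r r (\<lambda>(a, b). if a = p then h b else E a b)"
  have diagonal_product: "(\<Prod>a=0..<r. ?A h $$ (a, \<sigma> a)) = h (\<sigma> p) * (\<Prod>a\<in>{0..<r}-{p}. E a (\<sigma> a))"
    if "\<sigma> permutes {0..<r}" for h \<sigma>
  proof -
    have "\<sigma> a < r" if "a < r" for a using \<open>\<sigma> permutes {0..<r}\<close> that by (simp add: permutes_in_image)
    then show ?thesis using p by (subst prod.remove[of _ p]) (auto intro!: prod.cong)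
  qed
  have key: "(\<Prod>a=0..<r. ?A (\<lambda>b. f b + c * g b) $$ (a, \<sigma> a)) =
      (\<Prod>a=0..<r. ?A f $$ (a, \<sigma> a)) + c * (\<Prod>a=0..<r. ?A g $$ (a, \<sigma> a))"
    if "\<sigma> permutes {0..<r}" for \<sigma>
    unfolding diagonal_product[OF that] by (simp add: algebra_simps)
  have "det (?A (\<lambda>b. f b + c * g b)) =
      (\<Sum>\<sigma>\<in>{\<sigma>. \<sigma> permutes {0..<r}}. signof \<sigma> * (\<Prod>a=0..<r. ?A (\<lambda>b. f b + c * g b) $$ (a, \<sigma> a)))"
    by (rule det_def') simp
  also have "\<dots> = (\<Sum>\<sigma>\<in>{\<sigma>. \<sigma> permutes {0..<r}}. signof \<sigma> * (\<Prod>a=0..<r. ?A f $$ (a, \<sigma> a))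
      + c * (signof \<sigma> * (\<Prod>a=0..<r. ?A g $$ (a, \<sigma> a))))"
    by (rule sum.cong[OF refl]) (simp only: mem_Collect_eq key algebra_simps)
  also have "\<dots> = det (?A f) + c * det (?A g)"
    by (simp only: sum.distrib sum_distrib_left det_def'[of "?A f" r] det_def'[of "?A g" r] mat_carrier)
  finally show ?thesis .
qed

lemma strict_mono_on_fun_upd_adjacent:
  assumes R: "strict_mono_on {..<r} R" and p: "p < r" "R p = i"
    and adj: "i' = Suc i \<or> i = Suc i'" and i': "i' \<notin> R ` {..<r}"
  shows "strict_mono_on {..<r} (R(p := i'))"
proof (rule strict_mono_onI)
  fix a b assume ab: "a \<in> {..<r}" "b \<in> {..<r}" "a < b"
  with i' have "R a \<noteq> i'" "R b \<noteq> i'" by auto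
  moreover have "R a < R b" using strict_mono_onD[OF R ab] .
  moreover have "R a < R p" if "a \<noteq> p" "b = p" using strict_mono_onD[OF R] ab that by blast
  moreover have "R p < R b" if "a = p" using strict_mono_onD[OF R] ab that p by blast
  ultimately show "(R(p := i')) a < (R(p := i')) b"
    using ab p adj by (cases "a = p"; cases "b = p") auto
qed

lemma comm_ring_hom_map_poly: "comm_ring_hom h \<Longrightarrow> comm_ring_hom (map_poly h)"
proof -
  assume "comm_ring_hom h"
  then interpret map_poly_comm_ring_hom h by (simp add: map_poly_comm_ring_hom_def)
  show ?thesis by (rule comm_ring_hom_axioms)
qed

lemma hom_det_rows:
  assumes "comm_ring_hom \<phi>"
  shows "\<phi> (det_rows r F R) = det (mat r r (\<lambda>(a, b). \<phi> (F (R a) b)))"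
  unfolding det_rows_def comm_ring_hom.hom_det[OF assms, symmetric] map_mat_mat
  by (simp add: case_prod_unfold)

lemma det_rows_fun_upd_adjacent:
  assumes R: "strict_mono_on {..<r} R" and p: "p < r" "R p = i" and adj: "i' = Suc i \<or> i = Suc i'"
  shows "det_rows r F (R(p := i')) = 0 \<or> strict_mono_on {..<r} (R(p := i'))"
proof (cases "i' \<in> R ` {..<r}")
  case True
  then obtain q where q: "q < r" "R q = i'" by auto
  with p adj have "q \<noteq> p" by auto
  have "det_rows r F (R(p := i')) = 0"
    unfolding det_rows_def by (rule det_identical_rows[of _ r q p]) (use p q \<open>q \<noteq> p\<close> in auto)
  then show ?thesis ..
next
  case False
  then show ?thesis using strict_mono_on_fun_upd_adjacent[OF R p adj] by blast
qed

lemma hom_det_rows_row_operation: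
  fixes F :: "nat \<Rightarrow> nat \<Rightarrow> 'b::comm_ring_1" and \<Psi> h :: "'b \<Rightarrow> 'c::comm_ring_1"
  assumes \<Psi>: "comm_ring_hom \<Psi>" and h: "comm_ring_hom h"
    and entry: "\<And>u v. \<Psi> (F u v) = h (F u v) + (if u = i then c * h (F i' v) else 0)"
    and R: "strict_mono_on {..<r} R" and adj: "i' = Suc i \<or> i = Suc i'"
  obtains M where "\<Psi> (det_rows r F R) = h (det_rows r F R) + c * h M"
    and "M = 0 \<or> (\<exists>R'. strict_mono_on {..<r} R' \<and> R' ` {..<r} \<subseteq> insert i' (R ` {..<r}) \<and> M = det_rows r F R')"
proof -
  interpret h: comm_ring_hom h by (fact h)
  show ?thesis
  proof (cases "\<exists>p<r. R p = i")
    case False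
    then have "\<Psi> (det_rows r F R) = h (det_rows r F R)"
      unfolding hom_det_rows[OF \<Psi>] hom_det_rows[OF h] entry
      by (intro arg_cong[where f = det] cong_mat) auto
    then show ?thesis by (intro that[of 0]) simp_all
  next
    case True
    then obtain p where p: "p < r" "R p = i" by blast
    have row_p: "R a = i \<longleftrightarrow> a = p" if "a < r" for a
      using strict_mono_on_imp_inj_on[OF R] p that unfolding inj_on_def by auto
    have "\<Psi> (det_rows r F R) =
        det (mat r r (\<lambda>(a, b). if a = p then h (F i b) + c * h (F i' b) else h (F (R a) b)))"
      unfolding hom_det_rows[OF \<Psi>] entry by (intro arg_cong[where f = det] cong_mat) (auto simp: row_p p)
    also have "\<dots> = det (mat r r (\<lambda>(a, b). if a = p then h (F i b) else h (F (R a) b)))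
        + c * det (mat r r (\<lambda>(a, b). if a = p then h (F i' b) else h (F (R a) b)))"
      by (rule det_row_linear[OF p(1)])
    also have "det (mat r r (\<lambda>(a, b). if a = p then h (F i b) else h (F (R a) b))) = h (det_rows r F R)"
      unfolding hom_det_rows[OF h] by (intro arg_cong[where f = det] cong_mat) (auto simp: p)
    also have "det (mat r r (\<lambda>(a, b). if a = p then h (F i' b) else h (F (R a) b))) = h (det_rows r F (R(p := i')))"
      unfolding hom_det_rows[OF h] by (intro arg_cong[where f = det] cong_mat) auto
    finally have "\<Psi> (det_rows r F R) = h (det_rows r F R) + c * h (det_rows r F (R(p := i')))" .
    moreover have "R(p := i') ` {..<r} \<subseteq> insert i' (R ` {..<r})" by auto
    ultimately show ?thesis
      using det_rows_fun_upd_adjacent[OF R p adj, of F] by (intro that[of "det_rows r F (R(p := i'))"]) blast+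
  qed
qed

lemma coeff_hom_coeff_det_rows:
  fixes F :: "nat \<Rightarrow> nat \<Rightarrow> 'b::comm_ring_1 poly" and \<Phi> :: "'b \<Rightarrow> 'b poly"
  assumes \<Phi>: "comm_ring_hom \<Phi>"
    and entry: "\<And>u v l. \<Phi> (coeff (F u v) l) = [:coeff (F u v) l, if u = i then coeff (F i' v) l else 0:]"
    and R: "strict_mono_on {..<r} R" and adj: "i' = Suc i \<or> i = Suc i'"
  obtains "coeff (\<Phi> (coeff (det_rows r F R) l)) e = 0"
    | R' where "strict_mono_on {..<r} R'" "R' ` {..<r} \<subseteq> insert i' (R ` {..<r})"
      "coeff (\<Phi> (coeff (det_rows r F R) l)) e = coeff (det_rows r F R') l"
proof -
  let ?lift = "map_poly (\<lambda>q. [:q:]) :: 'b poly \<Rightarrow> 'b poly poly"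
  let ?c = "[:[:0, 1:]:] :: 'b poly poly"
  interpret \<Phi>: comm_ring_hom \<Phi> by (fact \<Phi>)
  have "comm_ring_hom (\<lambda>q::'b. [:q:])" by unfold_locales (auto simp: one_pCons)
  then have lift: "comm_ring_hom ?lift" by (rule comm_ring_hom_map_poly)
  have "map_poly \<Phi> (F u v) = ?lift (F u v) + (if u = i then ?c * ?lift (F i' v) else 0)" for u v
    by (rule poly_eqI) (simp add: coeff_map_poly entry)
  then obtain M where M: "map_poly \<Phi> (det_rows r F R) = ?lift (det_rows r F R) + ?c * ?lift M"
    and M_cases: "M = 0 \<or> (\<exists>R'. strict_mono_on {..<r} R' \<and> R' ` {..<r} \<subseteq> insert i' (R ` {..<r}) \<and> M = det_rows r F R')"
    using hom_det_rows_row_operation[OF comm_ring_hom_map_poly[OF \<Phi>] lift _ R adj] by blast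
  have "coeff (\<Phi> (coeff (det_rows r F R) l)) e = coeff (coeff (map_poly \<Phi> (det_rows r F R)) l) e"
    by (simp add: coeff_map_poly)
  also have "\<dots> = (if e = 0 then coeff (det_rows r F R) l else if e = 1 then coeff M l else 0)"
    unfolding M by (auto simp: coeff_pCons coeff_map_poly split: nat.splits)
  finally have coeff_eq: "coeff (\<Phi> (coeff (det_rows r F R) l)) e =
    (if e = 0 then coeff (det_rows r F R) l else if e = 1 then coeff M l else 0)" .
  consider "e = 0" | "e = 1" "M = 0" | R' where "e = 1" "strict_mono_on {..<r} R'"
      "R' ` {..<r} \<subseteq> insert i' (R ` {..<r})" "M = det_rows r F R'" | "e > 1"
    using M_cases by (cases "e = 0 \<or> e = 1") auto
  then show thesis
  proof cases
    case 1
    then show thesis using coeff_eq by (intro that(2)[OF R]) auto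
  next
    case (3 R')
    then show thesis using coeff_eq by (intro that(2)[of R']) auto
  qed (use coeff_eq that(1) in auto)
qed

section \<open>Minors of the truncated matrix X(t)\<close>

lemma subring_set_S_ring: "subring_set (S_ring m n k)"
proof
  fix p q :: "'a::field mpoly3"
  assume p: "p \<in> S_ring m n k" and q: "q \<in> S_ring m n k"
  show "p + q \<in> S_ring m n k"
    using p q Poly_Mapping.keys_add[of p q] unfolding S_ring_def by blast
  show "p * q \<in> S_ring m n k"
    unfolding S_ring_def
  proof (intro CollectI allI impI)
    fix \<mu> assume "\<mu> \<in> Poly_Mapping.keys (p * q)"
    then obtain \<alpha> \<beta> where "\<mu> = \<alpha> + \<beta>" "\<alpha> \<in> Poly_Mapping.keys p" "\<beta> \<in> Poly_Mapping.keys q"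
      using Poly_Mapping.keys_mult[of p q] by blast
    with p q Poly_Mapping.keys_add[of \<alpha> \<beta>]
    show "Poly_Mapping.keys \<mu> \<subseteq> {1..m} \<times> {1..n} \<times> {..<k}"
      unfolding S_ring_def by blast
  qed
qed (auto simp: S_ring_def)

lemma Xvar_eq_pm_var: "Xvar i j l = pm_var (i, j, l)"
  by (simp add: Xvar_def pm_var_def)

lemma pm_var_mem_S_ring: "x \<in> {1..m} \<times> {1..n} \<times> {..<k} \<Longrightarrow> pm_var x \<in> S_ring m n k"
  by (simp add: S_ring_def pm_var_def)

lemma deform_Xvar: "deform w (Xvar i j l) = [:Xvar i j l, w (i, j, l):]"
  by (simp add: Xvar_eq_pm_var deform_pm_var)

lemma deform_mem_poly_over_S_ring:
  assumes p: "p \<in> S_ring m n k" and w: "\<And>x. x \<in> {1..m} \<times> {1..n} \<times> {..<k} \<Longrightarrow> w x \<in> S_ring m n k"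
  shows "deform w p \<in> poly_over (S_ring m n k)"
proof -
  interpret S: subring_set "S_ring m n k" by (rule subring_set_S_ring)
  interpret poly: subring_set "poly_over (S_ring m n k)" by (rule S.subring_set_poly_over)
  show ?thesis
    unfolding deform_def eval_pm_def eval_monomial_def
  proof (intro poly.sum_mem poly.mult_mem poly.prod_mem poly.power_mem)
    fix \<mu> assume \<mu>: "\<mu> \<in> Poly_Mapping.keys p"
    show "[:Poly_Mapping.single 0 (Poly_Mapping.lookup p \<mu>):] \<in> poly_over (S_ring m n k)"
      by (rule S.const_mem_poly_over) (simp add: S_ring_def)
    fix x assume "x \<in> Poly_Mapping.keys \<mu>"
    with p \<mu> have "x \<in> {1..m} \<times> {1..n} \<times> {..<k}" unfolding S_ring_def by blast
    then show "[:pm_var x, w x:] \<in> poly_over (S_ring m n k)"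
      by (intro S.pCons_mem_poly_over S.const_mem_poly_over pm_var_mem_S_ring w)
  qed
qed

lemma coeff_xt: "coeff (xt k a b) l = (if l < k then Xvar a b l else 0)"
  by (simp add: xt_def coeff_sum coeff_monom)

lemma minor_eq_det_rows: "minor k r I J = det_rows r (\<lambda>u b. xt k u (J b)) I"
  unfolding minor_def det_rows_def det_def by (simp add: atLeast0LessThan)

lemma minor_eq_det_rows_transpose: "minor k r I J = det_rows r (\<lambda>u a. xt k (I a) u) J"
proof -
  have "minor k r I J = det (transpose_mat (mat r r (\<lambda>(a, b). xt k (I a) (J b))))"
    unfolding minor_eq_det_rows det_rows_def by (rule det_transpose[symmetric, of _ r]) simp
  also have "transpose_mat (mat r r (\<lambda>(a, b). xt k (I a) (J b))) = mat r r (\<lambda>(a, b). xt k (I b) (J a))"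
    by (rule eq_matI) auto
  finally show ?thesis unfolding det_rows_def .
qed

lemma minor_coeffs_subset_S_ring: "minor_coeffs m n r k \<subseteq> S_ring m n k"
proof
  interpret S: subring_set "S_ring m n k" by (rule subring_set_S_ring)
  interpret poly: subring_set "poly_over (S_ring m n k)" by (rule S.subring_set_poly_over)
  fix g :: "'a::field mpoly3" assume "g \<in> minor_coeffs m n r k"
  then obtain I J l where g: "g = coeff (minor k r I J) l"
    and I: "I ` {..<r} \<subseteq> {1..m}" and J: "J ` {..<r} \<subseteq> {1..n}"
    unfolding minor_coeffs_def by blast
  have "minor k r I J \<in> poly_over (S_ring m n k)"
    unfolding minor_def
  proof (intro poly.sum_mem poly.mult_mem poly.of_int_mem poly.prod_mem)
    fix \<sigma> a assume "\<sigma> \<in> {\<sigma>. \<sigma> permutes {..<r}}" "a \<in> {..<r}"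
    then have "\<sigma> a \<in> {..<r}" using permutes_in_image[of \<sigma> "{..<r}" a] by simp
    then have "I a \<in> {1..m}" "J (\<sigma> a) \<in> {1..n}" using I J \<open>a \<in> {..<r}\<close> by auto
    then show "xt k (I a) (J (\<sigma> a)) \<in> poly_over (S_ring m n k)"
      by (auto simp: poly_over_def coeff_xt Xvar_eq_pm_var intro: pm_var_mem_S_ring)
  qed
  then show "g \<in> S_ring m n k" unfolding g poly_over_def by blast
qed

text \<open>\<open>deform (row_shift i i')\<close> replaces x^(l)_{i,b} by x^(l)_{i,b} + c x^(l)_{i',b}, i.e. it adds
  c times row i' of X(t) to row i; \<open>deform (col_shift j j')\<close> does the same for columns.\<close>

definition row_shift :: "nat \<Rightarrow> nat \<Rightarrow> nat \<times> nat \<times> nat \<Rightarrow> 'a::field mpoly3" where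
  "row_shift i i' = (\<lambda>(a, b, l). if a = i then Xvar i' b l else 0)"

definition col_shift :: "nat \<Rightarrow> nat \<Rightarrow> nat \<times> nat \<times> nat \<Rightarrow> 'a::field mpoly3" where
  "col_shift j j' = (\<lambda>(a, b, l). if b = j then Xvar a j' l else 0)"

lemma row_shift_mem_S_ring:
  "i' \<in> {1..m} \<Longrightarrow> x \<in> {1..m} \<times> {1..n} \<times> {..<k} \<Longrightarrow> row_shift i i' x \<in> S_ring m n k"
  by (auto simp: row_shift_def Xvar_def S_ring_def split: prod.splits)

lemma col_shift_mem_S_ring:
  "j' \<in> {1..n} \<Longrightarrow> x \<in> {1..m} \<times> {1..n} \<times> {..<k} \<Longrightarrow> col_shift j j' x \<in> S_ring m n k"
  by (auto simp: col_shift_def Xvar_def S_ring_def split: prod.splits)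

lemma coeff_deform_row_shift_minor_coeffs:
  assumes adj: "i' = Suc i \<or> i = Suc i'" and i': "i' \<in> {1..m}" and g: "g \<in> minor_coeffs m n r k"
  shows "coeff (deform (row_shift i i') g) e \<in> insert 0 (minor_coeffs m n r k)"
proof -
  from g obtain I J l where g: "g = coeff (minor k r I J) l" and l: "l < k"
    and I: "strict_mono_on {..<r} I" "I ` {..<r} \<subseteq> {1..m}"
    and J: "strict_mono_on {..<r} J" "J ` {..<r} \<subseteq> {1..n}"
    unfolding minor_coeffs_def by blast
  have entry: "deform (row_shift i i') (coeff (xt k u (J v)) l') =
      [:coeff (xt k u (J v)) l', if u = i then coeff (xt k i' (J v)) l' else 0:]" for u v l'
    by (simp add: coeff_xt deform_Xvar row_shift_def)
  let ?c = "coeff (deform (row_shift i i') (coeff (det_rows r (\<lambda>u b. xt k u (J b)) I) l :: 'a mpoly3)) e"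
  show ?thesis
    unfolding g minor_eq_det_rows
  proof (rule coeff_hom_coeff_det_rows[OF comm_ring_hom_deform entry I(1) adj])
    fix I' assume I': "strict_mono_on {..<r} I'" "I' ` {..<r} \<subseteq> insert i' (I ` {..<r})"
      and c: "?c = coeff (det_rows r (\<lambda>u b. xt k u (J b)) I') l"
    have "I' ` {..<r} \<subseteq> {1..m}" using I'(2) I(2) i' by blast
    then have "coeff (minor k r I' J) l \<in> (minor_coeffs m n r k :: 'a mpoly3 set)"
      unfolding minor_coeffs_def using I'(1) l J
      by (intro CollectI exI[of _ I'] exI[of _ J] exI[of _ l]) simp
    then show "?c \<in> insert 0 (minor_coeffs m n r k)"
      using c by (simp add: minor_eq_det_rows)
  qed simp
qed

lemma coeff_deform_col_shift_minor_coeffs: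
  assumes adj: "j' = Suc j \<or> j = Suc j'" and j': "j' \<in> {1..n}" and g: "g \<in> minor_coeffs m n r k"
  shows "coeff (deform (col_shift j j') g) e \<in> insert 0 (minor_coeffs m n r k)"
proof -
  from g obtain I J l where g: "g = coeff (minor k r I J) l" and l: "l < k"
    and I: "strict_mono_on {..<r} I" "I ` {..<r} \<subseteq> {1..m}"
    and J: "strict_mono_on {..<r} J" "J ` {..<r} \<subseteq> {1..n}"
    unfolding minor_coeffs_def by blast
  have entry: "deform (col_shift j j') (coeff (xt k (I v) u) l') =
      [:coeff (xt k (I v) u) l', if u = j then coeff (xt k (I v) j') l' else 0:]" for u v l'
    by (simp add: coeff_xt deform_Xvar col_shift_def)
  let ?c = "coeff (deform (col_shift j j') (coeff (det_rows r (\<lambda>u a. xt k (I a) u) J) l :: 'a mpoly3)) e"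
  show ?thesis
    unfolding g minor_eq_det_rows_transpose
  proof (rule coeff_hom_coeff_det_rows[OF comm_ring_hom_deform entry J(1) adj])
    fix J' assume J': "strict_mono_on {..<r} J'" "J' ` {..<r} \<subseteq> insert j' (J ` {..<r})"
      and c: "?c = coeff (det_rows r (\<lambda>u a. xt k (I a) u) J') l"
    have "J' ` {..<r} \<subseteq> {1..n}" using J'(2) J(2) j' by blast
    then have "coeff (minor k r I J') l \<in> (minor_coeffs m n r k :: 'a mpoly3 set)"
      unfolding minor_coeffs_def using J'(1) l I
      by (intro CollectI exI[of _ I] exI[of _ J'] exI[of _ l]) simp
    then show "?c \<in> insert 0 (minor_coeffs m n r k)"
      using c by (simp add: minor_eq_det_rows_transpose)
  qed simp
qed

lemma minimal_prime_over_Iideal_deform: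
  assumes P: "minimal_prime_over (S_ring m n k) (Iideal m n r k) P"
    and w: "\<And>x. x \<in> {1..m} \<times> {1..n} \<times> {..<k} \<Longrightarrow> w x \<in> S_ring m n k"
    and w_minors: "\<And>g e. g \<in> minor_coeffs m n r k \<Longrightarrow> coeff (deform w g) e \<in> insert 0 (minor_coeffs m n r k)"
    and x: "(i, j, l) \<in> {1..m} \<times> {1..n} \<times> {..<k}" "Xvar i j l \<in> P"
  shows "w (i, j, l) \<in> P"
proof -
  interpret S: subring_set "S_ring m n k" by (rule subring_set_S_ring)
  have P_ideal: "ideal_in (S_ring m n k) P" and I_P: "Iideal m n r k \<subseteq> P"
    using P unfolding minimal_prime_over_def prime_ideal_in_def by auto
  have minors_P: "minor_coeffs m n r k \<subseteq> P"
    using I_P unfolding Iideal_def ideal_gen_in_def by blast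
  let ?K = "{g \<in> S_ring m n k. \<forall>e. coeff (deform w g) e \<in> P}"
  have K_ideal: "ideal_in (S_ring m n k) ?K"
    by (rule S.ideal_in_coeffs_preimage[OF comm_ring_hom_deform deform_mem_poly_over_S_ring[OF _ w] P_ideal])
  have "minor_coeffs m n r k \<subseteq> ?K"
  proof
    fix g :: "'a mpoly3" assume g: "g \<in> minor_coeffs m n r k"
    have "0 \<in> P" using P_ideal unfolding ideal_in_def by blast
    then have "coeff (deform w g) e \<in> P" for e
      using w_minors[OF g, of e] minors_P by (metis insertE subsetD)
    with g show "g \<in> ?K" using minor_coeffs_subset_S_ring by blast
  qed
  then have I_deform: "Iideal m n r k \<subseteq> ?K"
    unfolding Iideal_def by (rule ideal_gen_in_subset[OF K_ideal])
  show ?thesis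
  proof (rule S.minimal_prime_over_deformation[OF _ P comm_ring_hom_deform, where x = "Xvar i j l"])
    show "ideal_in (S_ring m n k) (Iideal m n r k)"
      unfolding Iideal_def by (rule S.ideal_in_ideal_gen_in[OF minor_coeffs_subset_S_ring])
    show "deform w g \<in> poly_over (S_ring m n k)" if "g \<in> S_ring m n k" for g
      by (rule deform_mem_poly_over_S_ring[OF that w])
    show "coeff (deform w g) 0 = g" if "g \<in> S_ring m n k" for g
      by (rule coeff_deform_0)
    show "coeff (deform w g) e \<in> P" if "g \<in> Iideal m n r k" for g e
      using I_deform that by blast
  qed (use x w deform_Xvar in auto)
qed

lemma Xvar_0_mem_minimal_prime_row_neighbour:
  assumes P: "minimal_prime_over (S_ring m n k) (Iideal m n r k) P" and k: "1 \<le> k"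
    and i: "i \<in> {1..m}" "i' \<in> {1..m}" "i' = Suc i \<or> i = Suc i'" and j: "j \<in> {1..n}"
    and x: "Xvar i j 0 \<in> P"
  shows "Xvar i' j 0 \<in> P"
proof -
  have "row_shift i i' (i, j, 0) \<in> P"
  proof (rule minimal_prime_over_Iideal_deform[OF P _ _ _ x])
    show "row_shift i i' x \<in> S_ring m n k" if "x \<in> {1..m} \<times> {1..n} \<times> {..<k}" for x
      by (rule row_shift_mem_S_ring[OF i(2) that])
    show "coeff (deform (row_shift i i') g) e \<in> insert 0 (minor_coeffs m n r k)"
      if "g \<in> minor_coeffs m n r k" for g e
      by (rule coeff_deform_row_shift_minor_coeffs[OF i(3,2) that])
  qed (use i j k in auto)
  then show ?thesis by (simp add: row_shift_def)
qed

lemma Xvar_0_mem_minimal_prime_col_neighbour: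
  assumes P: "minimal_prime_over (S_ring m n k) (Iideal m n r k) P" and k: "1 \<le> k"
    and j: "j \<in> {1..n}" "j' \<in> {1..n}" "j' = Suc j \<or> j = Suc j'" and i: "i \<in> {1..m}"
    and x: "Xvar i j 0 \<in> P"
  shows "Xvar i j' 0 \<in> P"
proof -
  have "col_shift j j' (i, j, 0) \<in> P"
  proof (rule minimal_prime_over_Iideal_deform[OF P _ _ _ x])
    show "col_shift j j' x \<in> S_ring m n k" if "x \<in> {1..m} \<times> {1..n} \<times> {..<k}" for x
      by (rule col_shift_mem_S_ring[OF j(2) that])
    show "coeff (deform (col_shift j j') g) e \<in> insert 0 (minor_coeffs m n r k)"
      if "g \<in> minor_coeffs m n r k" for g e
      by (rule coeff_deform_col_shift_minor_coeffs[OF j(3,2) that])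
  qed (use i j k in auto)
  then show ?thesis by (simp add: col_shift_def)
qed

lemma interval_walk:
  fixes a b lo hi :: nat
  assumes a: "a \<in> {lo..hi}" and b: "b \<in> {lo..hi}" and "Q a"
    and adjacent: "\<And>u v. u \<in> {lo..hi} \<Longrightarrow> v \<in> {lo..hi} \<Longrightarrow> v = Suc u \<or> u = Suc v \<Longrightarrow> Q u \<Longrightarrow> Q v"
  shows "Q b"
proof (cases "a \<le> b")
  case True
  then show ?thesis
  proof (induction rule: dec_induct)
    case (step u)
    then show ?case using a b by (intro adjacent[of u "Suc u"]) auto
  qed (fact \<open>Q a\<close>)
next
  case False
  then have "b \<le> a" by simp
  then show ?thesis
  proof (induction rule: inc_induct)
    case (step u)
    then show ?case using a b by (intro adjacent[of "Suc u" u]) auto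
  qed (fact \<open>Q a\<close>)
qed

theorem proposition2p6:
  fixes P :: "'a::field mpoly3 set" and m n r k :: nat
  assumes "alg_closed TYPE('a)"
    and "1 \<le> r" and "r \<le> m" and "m \<le> n" and "1 \<le> k"
    and "minimal_prime_over (S_ring m n k) (Iideal m n r k) P"
    and "i \<in> {1..m}" and "i' \<in> {1..m}" and "j \<in> {1..n}" and "j' \<in> {1..n}"
  shows "Xvar i j 0 \<in> P \<longleftrightarrow> Xvar i' j' 0 \<in> P"
proof -
  have row: "Xvar a' b 0 \<in> P" if "a \<in> {1..m}" "a' \<in> {1..m}" "b \<in> {1..n}" "Xvar a b 0 \<in> P" for a a' b
    using interval_walk[of a 1 m a' "\<lambda>a. Xvar a b 0 \<in> P"] that
      Xvar_0_mem_minimal_prime_row_neighbour[OF assms(6,5) _ _ _ that(3)] by blast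
  have col: "Xvar a b' 0 \<in> P" if "a \<in> {1..m}" "b \<in> {1..n}" "b' \<in> {1..n}" "Xvar a b 0 \<in> P" for a b b'
    using interval_walk[of b 1 n b' "\<lambda>b. Xvar a b 0 \<in> P"] that
      Xvar_0_mem_minimal_prime_col_neighbour[OF assms(6,5) _ _ _ that(1)] by blast
  show ?thesis
    using row[of i i' j] row[of i' i j'] col[of i' j j'] col[of i j' j] assms(7-10) by blast
qed

end
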